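(* Let $(\mathcal{C},\otimes,I,c)$ be a strict braided monoidal category and let $V,W$ be objects of $\mathcal{C}$ such that the internal homs $\hom(V,I)$ and $\hom(W,I)$ exist. Then $$\mathrm{ev}_{V,I}\circ(\mathrm{id}_{\hom(V,I)}\otimes\mathrm{ev}_{W,I}\otimes\mathrm{id}_V)=\mathrm{ev}_{W,I}\circ(\mathrm{id}_{\hom(W,I)}\otimes\mathrm{ev}_{V,I}\otimes\mathrm{id}_W)\circ\big((c_{\hom(W,I),\hom(V,I)})^{-1}\otimes c_{W,V}\big)$$ as morphisms $\hom(V,I)\otimes\hom(W,I)\otimes W\otimes V\to I$.
   Context: For objects $U,Y$, an internal hom $\hom(U,Y)$ is an object together with a natural isomorphism $\Theta_{X,U,Y}:\operatorname{Hom}_{\mathcal{C}}(X\otimes U,Y)\to\operatorname{Hom}_{\mathcal{C}}(X,\hom(U,Y))$ (natural in $X$). The evaluation morphism is $\mathrm{ev}_{U,Y}=\Theta^{-1}_{\hom(U,Y),U,Y}(\mathrm{id}_{\hom(U,Y)}):\hom(U,Y)\otimes U\to Y$. *)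

theory Defs
  imports Main
begin

record ('o, 'm) smcat =
  Obj :: "'o set"
  Hom :: "'o \<Rightarrow> 'o \<Rightarrow> 'm set"
  comp :: "'m \<Rightarrow> 'm \<Rightarrow> 'm"     (* comp g f = g \<circ> f *)
  ident :: "'o \<Rightarrow> 'm"
  tens_o :: "'o \<Rightarrow> 'o \<Rightarrow> 'o"
  tens_m :: "'m \<Rightarrow> 'm \<Rightarrow> 'm"
  unit_o :: "'o"
  braid :: "'o \<Rightarrow> 'o \<Rightarrow> 'm"    (* braid a b = c_{a,b} : a \<otimes> b \<rightarrow> b \<otimes> a *)

definition is_category :: "('o, 'm, 'x) smcat_scheme \<Rightarrow> bool" where
  "is_category C \<longleftrightarrow>
     (\<forall>a b f. f \<in> Hom C a b \<longrightarrow> a \<in> Obj C \<and> b \<in> Obj C) \<and>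
     (\<forall>a b a' b' f. f \<in> Hom C a b \<and> f \<in> Hom C a' b' \<longrightarrow> a = a' \<and> b = b') \<and>
     (\<forall>a\<in>Obj C. ident C a \<in> Hom C a a) \<and>
     (\<forall>a b c f g. f \<in> Hom C a b \<and> g \<in> Hom C b c \<longrightarrow> comp C g f \<in> Hom C a c) \<and>
     (\<forall>a b f. f \<in> Hom C a b \<longrightarrow> comp C f (ident C a) = f \<and> comp C (ident C b) f = f) \<and>
     (\<forall>a b c d f g h. f \<in> Hom C a b \<and> g \<in> Hom C b c \<and> h \<in> Hom C c d \<longrightarrow>
        comp C h (comp C g f) = comp C (comp C h g) f)"

definition is_iso_pair :: "('o, 'm, 'x) smcat_scheme \<Rightarrow> 'o \<Rightarrow> 'o \<Rightarrow> 'm \<Rightarrow> 'm \<Rightarrow> bool" where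
  "is_iso_pair C a b f g \<longleftrightarrow> f \<in> Hom C a b \<and> g \<in> Hom C b a \<and>
     comp C g f = ident C a \<and> comp C f g = ident C b"

text \<open>The inverse of an isomorphism f : a \<rightarrow> b (unique in a category).\<close>
definition minv :: "('o, 'm, 'x) smcat_scheme \<Rightarrow> 'o \<Rightarrow> 'o \<Rightarrow> 'm \<Rightarrow> 'm" where
  "minv C a b f = (THE g. is_iso_pair C a b f g)"

definition is_strict_monoidal :: "('o, 'm, 'x) smcat_scheme \<Rightarrow> bool" where
  "is_strict_monoidal C \<longleftrightarrow>
     is_category C \<and>
     unit_o C \<in> Obj C \<and>
     (\<forall>a\<in>Obj C. \<forall>b\<in>Obj C. tens_o C a b \<in> Obj C) \<and>
     (\<forall>a b c d f g. f \<in> Hom C a b \<and> g \<in> Hom C c d \<longrightarrow>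
        tens_m C f g \<in> Hom C (tens_o C a c) (tens_o C b d)) \<and>
     (\<forall>a\<in>Obj C. \<forall>b\<in>Obj C. tens_m C (ident C a) (ident C b) = ident C (tens_o C a b)) \<and>
     (\<forall>a b c a' b' c' f g f' g'. f \<in> Hom C a b \<and> g \<in> Hom C b c \<and>
        f' \<in> Hom C a' b' \<and> g' \<in> Hom C b' c' \<longrightarrow>
        tens_m C (comp C g f) (comp C g' f') = comp C (tens_m C g g') (tens_m C f f')) \<and>
     (\<forall>a\<in>Obj C. \<forall>b\<in>Obj C. \<forall>c\<in>Obj C.
        tens_o C (tens_o C a b) c = tens_o C a (tens_o C b c)) \<and>
     (\<forall>a\<in>Obj C. tens_o C (unit_o C) a = a \<and> tens_o C a (unit_o C) = a) \<and>
     (\<forall>a b a' b' a'' b'' f g h. f \<in> Hom C a b \<and> g \<in> Hom C a' b' \<and> h \<in> Hom C a'' b'' \<longrightarrow>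
        tens_m C (tens_m C f g) h = tens_m C f (tens_m C g h)) \<and>
     (\<forall>a b f. f \<in> Hom C a b \<longrightarrow>
        tens_m C (ident C (unit_o C)) f = f \<and> tens_m C f (ident C (unit_o C)) = f)"

definition is_strict_braided_monoidal :: "('o, 'm, 'x) smcat_scheme \<Rightarrow> bool" where
  "is_strict_braided_monoidal C \<longleftrightarrow>
     is_strict_monoidal C \<and>
     (\<forall>a\<in>Obj C. \<forall>b\<in>Obj C. \<exists>g. is_iso_pair C (tens_o C a b) (tens_o C b a) (braid C a b) g) \<and>
     (\<forall>a b c d f g. f \<in> Hom C a b \<and> g \<in> Hom C c d \<longrightarrow>
        comp C (braid C b d) (tens_m C f g) = comp C (tens_m C g f) (braid C a c)) \<and>
     (\<forall>a\<in>Obj C. \<forall>b\<in>Obj C. \<forall>c\<in>Obj C.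
        braid C a (tens_o C b c) =
          comp C (tens_m C (ident C b) (braid C a c)) (tens_m C (braid C a b) (ident C c)) \<and>
        braid C (tens_o C a b) c =
          comp C (tens_m C (braid C a c) (ident C b)) (tens_m C (ident C a) (braid C b c)))"

text \<open>(H, \<Theta>) is an internal hom hom(U,Y): H an object and
  \<Theta> X : Hom(X \<otimes> U, Y) \<rightarrow> Hom(X, H) a bijection for every object X, natural in X.\<close>
definition is_internal_hom ::
  "('o, 'm, 'x) smcat_scheme \<Rightarrow> 'o \<Rightarrow> 'o \<Rightarrow> 'o \<Rightarrow> ('o \<Rightarrow> 'm \<Rightarrow> 'm) \<Rightarrow> bool" where
  "is_internal_hom C U Y H \<Theta> \<longleftrightarrow>
     H \<in> Obj C \<and>
     (\<forall>X\<in>Obj C. bij_betw (\<Theta> X) (Hom C (tens_o C X U) Y) (Hom C X H)) \<and>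
     (\<forall>X X' h f. h \<in> Hom C X' X \<and> f \<in> Hom C (tens_o C X U) Y \<longrightarrow>
        \<Theta> X' (comp C f (tens_m C h (ident C U))) = comp C (\<Theta> X f) h)"

definition ev ::
  "('o, 'm, 'x) smcat_scheme \<Rightarrow> 'o \<Rightarrow> 'o \<Rightarrow> 'o \<Rightarrow> ('o \<Rightarrow> 'm \<Rightarrow> 'm) \<Rightarrow> 'm" where
  "ev C U Y H \<Theta> = inv_into (Hom C (tens_o C H U) Y) (\<Theta> H) (ident C H)"

end

theory Submission
  imports Defs
begin

text \<open>Only the types of the two evaluation maps matter. For arbitrary counits, i.e.
  morphisms f : A \<otimes> V \<rightarrow> I and g : B \<otimes> W \<rightarrow> I into the unit, both sides equal
  (f \<otimes> g) \<circ> (id_A \<otimes> c_{B \<otimes> W,V}). A counit slides through a braiding because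
  c_{X,I} = c_{I,X} = id, these being idempotent isomorphisms by the hexagon axioms. On the
  right-hand side, sliding id_B \<otimes> f past A produces c_{B,A}, which cancels against the inverse
  braiding, and the two braidings that remain combine into c_{B \<otimes> W,V} by a hexagon axiom.\<close>

locale category =
  fixes C :: "('o, 'm, 'x) smcat_scheme"
  assumes is_category: "is_category C"
begin

abbreviation compose :: "'m \<Rightarrow> 'm \<Rightarrow> 'm" (infixr "\<cdot>" 55)
  where "g \<cdot> f \<equiv> comp C g f"

text \<open>Hom-sets are pairwise disjoint, so every arrow has a unique source and target.\<close>

definition arr :: "'m \<Rightarrow> bool" where
  "arr f \<longleftrightarrow> (\<exists>a b. f \<in> Hom C a b)"

definition source :: "'m \<Rightarrow> 'o" where
  "source f = (THE a. \<exists>b. f \<in> Hom C a b)"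

definition target :: "'m \<Rightarrow> 'o" where
  "target f = (THE b. \<exists>a. f \<in> Hom C a b)"

lemma Hom_in_Obj: "f \<in> Hom C a b \<Longrightarrow> a \<in> Obj C \<and> b \<in> Obj C"
  and Hom_unique: "f \<in> Hom C a b \<Longrightarrow> f \<in> Hom C a' b' \<Longrightarrow> a = a' \<and> b = b'"
  and ident_in_Hom: "a \<in> Obj C \<Longrightarrow> ident C a \<in> Hom C a a"
  and comp_in_Hom: "f \<in> Hom C a b \<Longrightarrow> g \<in> Hom C b c \<Longrightarrow> g \<cdot> f \<in> Hom C a c"
  and comp_ident_Hom: "f \<in> Hom C a b \<Longrightarrow> f \<cdot> ident C a = f \<and> ident C b \<cdot> f = f"
  and comp_assoc_Hom: "f \<in> Hom C a b \<Longrightarrow> g \<in> Hom C b c \<Longrightarrow> h \<in> Hom C c d \<Longrightarrow>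
    h \<cdot> g \<cdot> f = (h \<cdot> g) \<cdot> f"
  using is_category unfolding is_category_def by metis+

lemma source_target_of_Hom:
  assumes "f \<in> Hom C a b"
  shows "source f = a" and "target f = b"
  unfolding source_def target_def
  by (rule the_equality; use assms Hom_unique in blast)+

lemma in_Hom_iff: "f \<in> Hom C a b \<longleftrightarrow> arr f \<and> source f = a \<and> target f = b"
  using source_target_of_Hom unfolding arr_def by blast

lemma arr_in_Hom: "arr f \<Longrightarrow> f \<in> Hom C (source f) (target f)"
  by (simp add: in_Hom_iff)

lemma source_in_Obj [simp]: "arr f \<Longrightarrow> source f \<in> Obj C"
  and target_in_Obj [simp]: "arr f \<Longrightarrow> target f \<in> Obj C"
  using Hom_in_Obj arr_in_Hom by blast+

lemma arr_ident [simp]: "a \<in> Obj C \<Longrightarrow> arr (ident C a)"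
  and source_ident [simp]: "a \<in> Obj C \<Longrightarrow> source (ident C a) = a"
  and target_ident [simp]: "a \<in> Obj C \<Longrightarrow> target (ident C a) = a"
  using ident_in_Hom by (simp_all add: in_Hom_iff)

lemma
  assumes "arr f" and "arr g" and "target f = source g"
  shows arr_comp [simp]: "arr (g \<cdot> f)"
    and source_comp [simp]: "source (g \<cdot> f) = source f"
    and target_comp [simp]: "target (g \<cdot> f) = target g"
  using comp_in_Hom[of f "source f" "target f" g "target g"] assms
  by (simp_all add: in_Hom_iff)

lemma comp_ident_right [simp]: "arr f \<Longrightarrow> a = source f \<Longrightarrow> f \<cdot> ident C a = f"
  and comp_ident_left [simp]: "arr f \<Longrightarrow> b = target f \<Longrightarrow> ident C b \<cdot> f = f"
  using comp_ident_Hom arr_in_Hom by blast+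

lemma comp_assoc:
  "arr f \<Longrightarrow> arr g \<Longrightarrow> arr h \<Longrightarrow> target f = source g \<Longrightarrow> target g = source h \<Longrightarrow>
    h \<cdot> g \<cdot> f = (h \<cdot> g) \<cdot> f"
  using comp_assoc_Hom[of f "source f" "target f" g "target g" h "target h"]
  by (simp add: in_Hom_iff)

lemma iso_pair_unique:
  assumes "is_iso_pair C a b f g" and "is_iso_pair C a b f g'"
  shows "g = g'"
proof -
  have "g = g \<cdot> f \<cdot> g'"
    using assms unfolding is_iso_pair_def in_Hom_iff by (metis comp_ident_right)
  also have "\<dots> = (g \<cdot> f) \<cdot> g'"
    using assms unfolding is_iso_pair_def in_Hom_iff by (metis comp_assoc)
  also have "\<dots> = g'"
    using assms unfolding is_iso_pair_def in_Hom_iff by simp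
  finally show ?thesis .
qed

lemma is_iso_pair_minv: "is_iso_pair C a b f g \<Longrightarrow> is_iso_pair C a b f (minv C a b f)"
  unfolding minv_def by (metis iso_pair_unique theI)

lemma idempotent_iso_eq_ident:
  assumes "is_iso_pair C a a f g" and "f \<cdot> f = f"
  shows "f = ident C a"
proof -
  have "f = (g \<cdot> f) \<cdot> f"
    using assms unfolding is_iso_pair_def in_Hom_iff by (metis comp_ident_left)
  also have "\<dots> = g \<cdot> f \<cdot> f"
    using assms unfolding is_iso_pair_def in_Hom_iff by (metis comp_assoc)
  also have "\<dots> = ident C a"
    using assms unfolding is_iso_pair_def by simp
  finally show ?thesis .
qed

lemma ev_in_Hom:
  assumes "is_internal_hom C U Y H \<Theta>"
  shows "ev C U Y H \<Theta> \<in> Hom C (tens_o C H U) Y"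
proof -
  have "H \<in> Obj C" and "bij_betw (\<Theta> H) (Hom C (tens_o C H U) Y) (Hom C H H)"
    using assms unfolding is_internal_hom_def by blast+
  then have "ident C H \<in> \<Theta> H ` Hom C (tens_o C H U) Y"
    using ident_in_Hom by (simp add: bij_betw_def)
  then show ?thesis
    unfolding ev_def by (rule inv_into_into)
qed

end

locale strict_braided_monoidal =
  fixes C :: "('o, 'm, 'x) smcat_scheme"
  assumes is_strict_braided_monoidal: "is_strict_braided_monoidal C"

sublocale strict_braided_monoidal \<subseteq> category
  using is_strict_braided_monoidal
  unfolding is_strict_braided_monoidal_def is_strict_monoidal_def
  by unfold_locales blast

context strict_braided_monoidal
begin

abbreviation tensor :: "'m \<Rightarrow> 'm \<Rightarrow> 'm" (infixr "\<otimes>" 65)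
  where "f \<otimes> g \<equiv> tens_m C f g"

abbreviation tensor_obj :: "'o \<Rightarrow> 'o \<Rightarrow> 'o" (infixr "\<odot>" 65)
  where "a \<odot> b \<equiv> tens_o C a b"

abbreviation unit_obj :: "'o" ("\<I>")
  where "\<I> \<equiv> unit_o C"

lemma is_strict_monoidal: "is_strict_monoidal C"
  using is_strict_braided_monoidal unfolding is_strict_braided_monoidal_def by blast

lemma unit_in_Obj [simp]: "\<I> \<in> Obj C"
  and tens_o_in_Obj [simp]: "a \<in> Obj C \<Longrightarrow> b \<in> Obj C \<Longrightarrow> a \<odot> b \<in> Obj C"
  and tens_o_assoc [simp]: "a \<in> Obj C \<Longrightarrow> b \<in> Obj C \<Longrightarrow> c \<in> Obj C \<Longrightarrow> (a \<odot> b) \<odot> c = a \<odot> b \<odot> c"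
  and tens_o_unit_left [simp]: "a \<in> Obj C \<Longrightarrow> \<I> \<odot> a = a"
  and tens_o_unit_right [simp]: "a \<in> Obj C \<Longrightarrow> a \<odot> \<I> = a"
  using is_strict_monoidal unfolding is_strict_monoidal_def by metis+

lemma
  assumes "arr f" and "arr g"
  shows arr_tens [simp]: "arr (f \<otimes> g)"
    and source_tens [simp]: "source (f \<otimes> g) = source f \<odot> source g"
    and target_tens [simp]: "target (f \<otimes> g) = target f \<odot> target g"
proof -
  have "f \<otimes> g \<in> Hom C (source f \<odot> source g) (target f \<odot> target g)"
    using is_strict_monoidal assms arr_in_Hom unfolding is_strict_monoidal_def by metis
  then show "arr (f \<otimes> g)" "source (f \<otimes> g) = source f \<odot> source g"
      "target (f \<otimes> g) = target f \<odot> target g"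
    by (simp_all add: in_Hom_iff)
qed

lemma tens_ident: "a \<in> Obj C \<Longrightarrow> b \<in> Obj C \<Longrightarrow> ident C a \<otimes> ident C b = ident C (a \<odot> b)"
  using is_strict_monoidal unfolding is_strict_monoidal_def by metis

lemma tens_comp:
  "arr f \<Longrightarrow> arr g \<Longrightarrow> target f = source g \<Longrightarrow> arr f' \<Longrightarrow> arr g' \<Longrightarrow> target f' = source g' \<Longrightarrow>
    (g \<cdot> f) \<otimes> (g' \<cdot> f') = (g \<otimes> g') \<cdot> (f \<otimes> f')"
  using is_strict_monoidal arr_in_Hom unfolding is_strict_monoidal_def by metis

lemma tens_assoc: "arr f \<Longrightarrow> arr g \<Longrightarrow> arr h \<Longrightarrow> (f \<otimes> g) \<otimes> h = f \<otimes> g \<otimes> h"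
  using is_strict_monoidal arr_in_Hom unfolding is_strict_monoidal_def by metis

lemma tens_unit_left [simp]: "arr f \<Longrightarrow> ident C \<I> \<otimes> f = f"
  and tens_unit_right [simp]: "arr f \<Longrightarrow> f \<otimes> ident C \<I> = f"
  using is_strict_monoidal arr_in_Hom unfolding is_strict_monoidal_def by metis+

lemma braid_has_inverse:
  assumes "a \<in> Obj C" and "b \<in> Obj C"
  shows "is_iso_pair C (a \<odot> b) (b \<odot> a) (braid C a b) (minv C (a \<odot> b) (b \<odot> a) (braid C a b))"
  using is_strict_braided_monoidal assms is_iso_pair_minv
  unfolding is_strict_braided_monoidal_def by metis

lemma
  assumes "a \<in> Obj C" and "b \<in> Obj C"
  shows arr_braid [simp]: "arr (braid C a b)"
    and source_braid [simp]: "source (braid C a b) = a \<odot> b"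
    and target_braid [simp]: "target (braid C a b) = b \<odot> a"
  using braid_has_inverse[OF assms] unfolding is_iso_pair_def in_Hom_iff by blast+

lemma braid_natural:
  "arr f \<Longrightarrow> arr g \<Longrightarrow>
    braid C (target f) (target g) \<cdot> (f \<otimes> g) = (g \<otimes> f) \<cdot> braid C (source f) (source g)"
  using is_strict_braided_monoidal arr_in_Hom unfolding is_strict_braided_monoidal_def by blast

lemma braid_tens_right:
  "a \<in> Obj C \<Longrightarrow> b \<in> Obj C \<Longrightarrow> c \<in> Obj C \<Longrightarrow>
    braid C a (b \<odot> c) = (ident C b \<otimes> braid C a c) \<cdot> (braid C a b \<otimes> ident C c)"
  and braid_tens_left:
  "a \<in> Obj C \<Longrightarrow> b \<in> Obj C \<Longrightarrow> c \<in> Obj C \<Longrightarrow>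
    braid C (a \<odot> b) c = (braid C a c \<otimes> ident C b) \<cdot> (ident C a \<otimes> braid C b c)"
  using is_strict_braided_monoidal unfolding is_strict_braided_monoidal_def by blast+

lemma braid_unit_right [simp]: "a \<in> Obj C \<Longrightarrow> braid C a \<I> = ident C a"
  using braid_tens_right[of a \<I> \<I>] braid_has_inverse[of a \<I>]
  by (intro idempotent_iso_eq_ident) auto

lemma braid_unit_left [simp]: "a \<in> Obj C \<Longrightarrow> braid C \<I> a = ident C a"
  using braid_tens_left[of \<I> \<I> a] braid_has_inverse[of \<I> a]
  by (intro idempotent_iso_eq_ident) auto

lemma counit_tens_ident:
  assumes "g \<in> Hom C B \<I>" and "V \<in> Obj C"
  shows "g \<otimes> ident C V = (ident C V \<otimes> g) \<cdot> braid C B V"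
  using braid_natural[of g "ident C V"] assms by (simp add: in_Hom_iff)

lemma ident_tens_counit:
  assumes "f \<in> Hom C X \<I>" and "B \<in> Obj C"
  shows "ident C B \<otimes> f = (f \<otimes> ident C B) \<cdot> braid C B X"
  using braid_natural[of "ident C B" f] assms by (simp add: in_Hom_iff)

lemma counit_comp_ident_tens:
  assumes "f \<in> Hom C X \<I>" and "g \<in> Hom C Y \<I>"
  shows "f \<cdot> (ident C X \<otimes> g) = f \<otimes> g"
  using tens_comp[of "ident C X" f g "ident C \<I>"] assms Hom_in_Obj[OF assms(1)]
  by (simp add: in_Hom_iff)

lemma counit_comp_tens_ident:
  assumes "f \<in> Hom C X \<I>" and "g \<in> Hom C Y \<I>"
  shows "g \<cdot> (f \<otimes> ident C Y) = f \<otimes> g"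
  using tens_comp[of f "ident C \<I>" "ident C Y" g] assms Hom_in_Obj[OF assms(2)]
  by (simp add: in_Hom_iff)

lemma counit_through_middle:
  assumes f: "f \<in> Hom C (A \<odot> V) \<I>" and g: "g \<in> Hom C B \<I>"
    and A: "A \<in> Obj C" and V: "V \<in> Obj C"
  shows "f \<cdot> ((ident C A \<otimes> g) \<otimes> ident C V) = (f \<otimes> g) \<cdot> (ident C A \<otimes> braid C B V)"
proof -
  from f g have [simp]: "arr f" "source f = A \<odot> V" "target f = \<I>"
      "arr g" "source g = B" "target g = \<I>" "B \<in> Obj C"
    by (simp_all add: in_Hom_iff Hom_in_Obj)
  have "(ident C A \<otimes> g) \<otimes> ident C V = ident C A \<otimes> ((ident C V \<otimes> g) \<cdot> braid C B V)"
    using counit_tens_ident[OF g V] A V by (simp add: tens_assoc)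
  also have "\<dots> = (ident C (A \<odot> V) \<otimes> g) \<cdot> (ident C A \<otimes> braid C B V)"
    using tens_comp[of "ident C A" "ident C A" "braid C B V" "ident C V \<otimes> g"] A V
    by (simp add: tens_assoc tens_ident[symmetric])
  finally have "f \<cdot> ((ident C A \<otimes> g) \<otimes> ident C V)
      = f \<cdot> (ident C (A \<odot> V) \<otimes> g) \<cdot> (ident C A \<otimes> braid C B V)"
    by simp
  also have "\<dots> = (f \<otimes> g) \<cdot> (ident C A \<otimes> braid C B V)"
    using counit_comp_ident_tens[OF f g] A V by (simp add: comp_assoc)
  finally show ?thesis .
qed

lemma counit_past_braid_inverse:
  assumes f: "f \<in> Hom C (A \<odot> V) \<I>" and A: "A \<in> Obj C" and B: "B \<in> Obj C" and V: "V \<in> Obj C"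
  shows "(ident C B \<otimes> f) \<cdot> (minv C (B \<odot> A) (A \<odot> B) (braid C B A) \<otimes> ident C V)
    = (f \<otimes> ident C B) \<cdot> (ident C A \<otimes> braid C B V)"
proof -
  define k where "k = minv C (B \<odot> A) (A \<odot> B) (braid C B A)"
  have [simp]: "arr f" "source f = A \<odot> V" "target f = \<I>"
    using f by (simp_all add: in_Hom_iff)
  have [simp]: "arr k" "source k = A \<odot> B" "target k = B \<odot> A" "braid C B A \<cdot> k = ident C (A \<odot> B)"
    using braid_has_inverse[OF B A] unfolding k_def is_iso_pair_def in_Hom_iff by blast+
  have cancel: "(braid C B A \<otimes> ident C V) \<cdot> (k \<otimes> ident C V) = ident C (A \<odot> B \<odot> V)"
    using tens_comp[of k "braid C B A" "ident C V" "ident C V"] A B V by (simp add: tens_ident)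
  have "(ident C B \<otimes> f) \<cdot> (k \<otimes> ident C V)
      = ((f \<otimes> ident C B) \<cdot> (ident C A \<otimes> braid C B V)) \<cdot> (braid C B A \<otimes> ident C V) \<cdot> (k \<otimes> ident C V)"
    using ident_tens_counit[OF f B] braid_tens_right[OF B A V] A B V by (simp add: comp_assoc)
  also have "\<dots> = (f \<otimes> ident C B) \<cdot> (ident C A \<otimes> braid C B V)"
    using cancel A B V by simp
  finally show ?thesis unfolding k_def .
qed

lemma counit_through_middle_braided:
  assumes f: "f \<in> Hom C (A \<odot> V) \<I>" and g: "g \<in> Hom C (B \<odot> W) \<I>"
    and A: "A \<in> Obj C" and B: "B \<in> Obj C" and V: "V \<in> Obj C" and W: "W \<in> Obj C"
  shows "(g \<cdot> ((ident C B \<otimes> f) \<otimes> ident C W))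
      \<cdot> (minv C (B \<odot> A) (A \<odot> B) (braid C B A) \<otimes> braid C W V)
    = (f \<otimes> g) \<cdot> (ident C A \<otimes> braid C (B \<odot> W) V)"
proof -
  define k where "k = minv C (B \<odot> A) (A \<odot> B) (braid C B A)"
  have [simp]: "arr f" "source f = A \<odot> V" "target f = \<I>"
      "arr g" "source g = B \<odot> W" "target g = \<I>"
    using f g by (simp_all add: in_Hom_iff)
  have [simp]: "arr k" "source k = A \<odot> B" "target k = B \<odot> A"
    using braid_has_inverse[OF B A] unfolding k_def is_iso_pair_def in_Hom_iff by blast+
  have factor: "k \<otimes> braid C W V = ((k \<otimes> ident C V) \<otimes> ident C W) \<cdot> (ident C (A \<odot> B) \<otimes> braid C W V)"
    using tens_comp[of "ident C (A \<odot> B)" k "braid C W V" "ident C (V \<odot> W)"] A B V W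
    by (simp add: tens_assoc tens_ident)
  have contract: "((ident C B \<otimes> f) \<otimes> ident C W) \<cdot> ((k \<otimes> ident C V) \<otimes> ident C W)
      = (f \<otimes> ident C (B \<odot> W)) \<cdot> (ident C A \<otimes> braid C B V \<otimes> ident C W)"
    using tens_comp[of "k \<otimes> ident C V" "ident C B \<otimes> f" "ident C W" "ident C W"]
      tens_comp[of "ident C A \<otimes> braid C B V" "f \<otimes> ident C B" "ident C W" "ident C W"]
      counit_past_braid_inverse[OF f A B V, folded k_def] A B V W
    by (simp add: tens_assoc tens_ident)
  have hexagon: "(ident C A \<otimes> braid C B V \<otimes> ident C W) \<cdot> (ident C (A \<odot> B) \<otimes> braid C W V)
      = ident C A \<otimes> braid C (B \<odot> W) V"
    using tens_comp[of "ident C A" "ident C A" "ident C B \<otimes> braid C W V" "braid C B V \<otimes> ident C W"]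
      braid_tens_left[OF B W V] A B V W
    by (simp add: tens_assoc tens_ident[symmetric])
  have "(g \<cdot> ((ident C B \<otimes> f) \<otimes> ident C W)) \<cdot> (k \<otimes> braid C W V)
      = (g \<cdot> ((ident C B \<otimes> f) \<otimes> ident C W) \<cdot> ((k \<otimes> ident C V) \<otimes> ident C W))
        \<cdot> (ident C (A \<odot> B) \<otimes> braid C W V)"
    using factor A B V W by (simp add: comp_assoc)
  also have "\<dots> = (g \<cdot> (f \<otimes> ident C (B \<odot> W))) \<cdot> (ident C A \<otimes> braid C B V \<otimes> ident C W)
        \<cdot> (ident C (A \<odot> B) \<otimes> braid C W V)"
    using contract A B V W by (simp add: comp_assoc)
  also have "\<dots> = (f \<otimes> g) \<cdot> (ident C A \<otimes> braid C (B \<odot> W) V)"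
    using hexagon counit_comp_tens_ident[OF f g] by simp
  finally show ?thesis unfolding k_def .
qed

end

theorem lemma3p23:
  fixes C :: "('o, 'm, 'x) smcat_scheme"
    and V W HV HW :: 'o
    and \<Theta>V \<Theta>W :: "'o \<Rightarrow> 'm \<Rightarrow> 'm"
  assumes "is_strict_braided_monoidal C"
    and "V \<in> Obj C" and "W \<in> Obj C"
    and "is_internal_hom C V (unit_o C) HV \<Theta>V"
    and "is_internal_hom C W (unit_o C) HW \<Theta>W"
  shows "comp C (ev C V (unit_o C) HV \<Theta>V)
           (tens_m C (tens_m C (ident C HV) (ev C W (unit_o C) HW \<Theta>W)) (ident C V))
       = comp C (comp C (ev C W (unit_o C) HW \<Theta>W)
           (tens_m C (tens_m C (ident C HW) (ev C V (unit_o C) HV \<Theta>V)) (ident C W)))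
           (tens_m C (minv C (tens_o C HW HV) (tens_o C HV HW) (braid C HW HV)) (braid C W V))"
proof -
  interpret strict_braided_monoidal C
    using assms(1) by (rule strict_braided_monoidal.intro)
  have HV: "HV \<in> Obj C" and HW: "HW \<in> Obj C"
    using assms(4,5) unfolding is_internal_hom_def by blast+
  have evV: "ev C V \<I> HV \<Theta>V \<in> Hom C (HV \<odot> V) \<I>"
    using assms(4) by (rule ev_in_Hom)
  have evW: "ev C W \<I> HW \<Theta>W \<in> Hom C (HW \<odot> W) \<I>"
    using assms(5) by (rule ev_in_Hom)
  have "ev C V \<I> HV \<Theta>V \<cdot> ((ident C HV \<otimes> ev C W \<I> HW \<Theta>W) \<otimes> ident C V)
      = (ev C V \<I> HV \<Theta>V \<otimes> ev C W \<I> HW \<Theta>W) \<cdot> (ident C HV \<otimes> braid C (HW \<odot> W) V)"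
    using evV evW HV assms(2) by (rule counit_through_middle)
  also have "\<dots> = (ev C W \<I> HW \<Theta>W \<cdot> ((ident C HW \<otimes> ev C V \<I> HV \<Theta>V) \<otimes> ident C W))
      \<cdot> (minv C (HW \<odot> HV) (HV \<odot> HW) (braid C HW HV) \<otimes> braid C W V)"
    using evV evW HV HW assms(2,3) by (rule counit_through_middle_braided[symmetric])
  finally show ?thesis .
qed

end
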